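(* Let $\emptyset\neq H\subset\mathbb R^n$, let $A\colon[0,\infty)\to\mathbb R^{n\times n}$ and $f\colon[0,\infty)\times\mathbb R^n\to\mathbb R^n$ be continuous, and suppose that the linear equation $x'=A(t)x$ has an exponential dichotomy on $[0,\infty)$ with constants $N,\lambda>0$. Suppose there exist $\delta,L>0$ such that $$|f(t,x_1)-f(t,x_2)|\le L|x_1-x_2|\quad\text{for all }t\ge0\text{ and }x_1,x_2\in\mathcal N_\delta(H).$$ If $L<\dfrac{\lambda}{2N}$, then the equation $x'=A(t)x+f(t,x)$ has the conditional Lipschitz shadowing property in $H$.
   Context: $|\cdot|$ is a fixed norm on $\mathbb R^n$ and also denotes the induced matrix norm on $\mathbb R^{n\times n}$. For $x\in\mathbb R^n$ and $\delta>0$, $B_\delta(x)=\{y\in\mathbb R^n:|y-x|\le\delta\}$, and for $\emptyset\ne H\subset\mathbb R^n$, $\mathcal N_\delta(H)=\bigcup_{x\in H}B_\delta(x)$. For a continuous $g\colon[0,\infty)\times\mathbb R^n\to\mathbb R^n$ consider $x'=g(t,x)$. Given $\tau\in(0,\infty]$, a pseudosolution of this equation on $[0,\tau)$ is a continuously differentiable $y\colon[0,\tau)\to\mathbb R^n$ such that $\sigma_y:=\sup_{0\le t<\tau}|y'(t)-g(t,y(t))|<\infty$; $\sigma_y$ is its maximum error. For $\emptyset\ne H\subset\mathbb R^n$, the equation has the conditional Lipschitz shadowing property in $H$ if there exist $\varepsilon_0>0$ and $\kappa>0$ such that: whenever $0<\varepsilon\le\varepsilon_0$ and $y$ is a pseudosolution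 on $[0,\tau)$ for some $\tau\in(0,\infty]$ with $\sigma_y\le\varepsilon$ and $y(t)\in H$ for all $t\in[0,\tau)$, there is a solution $x$ of the equation defined on $[0,\tau)$ with $\sup_{0\le t<\tau}|x(t)-y(t)|\le\kappa\varepsilon$. Let $T(t,s)=\Phi(t)\Phi(s)^{-1}$ be the transition matrix of $x'=A(t)x$ ($\Phi$ a fundamental matrix). This equation has an exponential dichotomy on $[0,\infty)$ if there exist projections $P(t)\in\mathbb R^{n\times n}$, $t\ge0$, and constants $N,\lambda>0$ with $P(t)T(t,s)=T(t,s)P(s)$ for all $t,s\ge0$, $|T(t,s)P(s)|\le Ne^{-\lambda(t-s)}$ for $t\ge s\ge0$, and $|T(t,s)(I-P(s))|\le Ne^{-\lambda(s-t)}$ for $0\le t\le s$. *)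

theory Defs
  imports "HOL-Analysis.Analysis"
begin

definition is_norm :: "(real^'n \<Rightarrow> real) \<Rightarrow> bool" where
  "is_norm nrm \<longleftrightarrow> (\<forall>x. 0 \<le> nrm x) \<and> (\<forall>x. nrm x = 0 \<longleftrightarrow> x = 0)
     \<and> (\<forall>c x. nrm (c *\<^sub>R x) = \<bar>c\<bar> * nrm x)
     \<and> (\<forall>x y. nrm (x + y) \<le> nrm x + nrm y)"

definition mat_norm :: "(real^'n \<Rightarrow> real) \<Rightarrow> real^'n^'n \<Rightarrow> real" where
  "mat_norm nrm M = (SUP x\<in>{x. nrm x \<le> 1}. nrm (M *v x))"

definition closed_ball_n :: "(real^'n \<Rightarrow> real) \<Rightarrow> real^'n \<Rightarrow> real \<Rightarrow> (real^'n) set" where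
  "closed_ball_n nrm x \<delta> = {y. nrm (y - x) \<le> \<delta>}"

definition nbhd_n :: "(real^'n \<Rightarrow> real) \<Rightarrow> real \<Rightarrow> (real^'n) set \<Rightarrow> (real^'n) set" where
  "nbhd_n nrm \<delta> H = (\<Union>x\<in>H. closed_ball_n nrm x \<delta>)"

definition Itau :: "ereal \<Rightarrow> real set" where
  "Itau \<tau> = {t. 0 \<le> t \<and> ereal t < \<tau>}"

definition pseudosol_le ::
  "(real^'n \<Rightarrow> real) \<Rightarrow> (real \<Rightarrow> real^'n \<Rightarrow> real^'n) \<Rightarrow> ereal \<Rightarrow> (real \<Rightarrow> real^'n) \<Rightarrow> real \<Rightarrow> bool" where
  "pseudosol_le nrm g \<tau> y \<epsilon> \<longleftrightarrow>
     (\<exists>y'. (\<forall>t\<in>Itau \<tau>. (y has_vector_derivative y' t) (at t within Itau \<tau>))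
        \<and> continuous_on (Itau \<tau>) y'
        \<and> (\<forall>t\<in>Itau \<tau>. nrm (y' t - g t (y t)) \<le> \<epsilon>))"

definition is_solution_on ::
  "(real \<Rightarrow> real^'n \<Rightarrow> real^'n) \<Rightarrow> ereal \<Rightarrow> (real \<Rightarrow> real^'n) \<Rightarrow> bool" where
  "is_solution_on g \<tau> x \<longleftrightarrow>
     (\<forall>t\<in>Itau \<tau>. (x has_vector_derivative g t (x t)) (at t within Itau \<tau>))"

definition cond_lipschitz_shadowing ::
  "(real^'n \<Rightarrow> real) \<Rightarrow> (real \<Rightarrow> real^'n \<Rightarrow> real^'n) \<Rightarrow> (real^'n) set \<Rightarrow> bool" where
  "cond_lipschitz_shadowing nrm g H \<longleftrightarrow>
     (\<exists>\<epsilon>0>0. \<exists>\<kappa>>0. \<forall>\<epsilon> \<tau> y. 0 < \<epsilon> \<longrightarrow> \<epsilon> \<le> \<epsilon>0 \<longrightarrow> 0 < \<tau> \<longrightarrow>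
        pseudosol_le nrm g \<tau> y \<epsilon> \<longrightarrow> (\<forall>t\<in>Itau \<tau>. y t \<in> H) \<longrightarrow>
        (\<exists>x. is_solution_on g \<tau> x \<and> (\<forall>t\<in>Itau \<tau>. nrm (x t - y t) \<le> \<kappa> * \<epsilon>)))"

definition fundamental_matrix :: "(real \<Rightarrow> real^'n^'n) \<Rightarrow> (real \<Rightarrow> real^'n^'n) \<Rightarrow> bool" where
  "fundamental_matrix A \<Phi> \<longleftrightarrow>
     (\<forall>t\<ge>0. (\<Phi> has_vector_derivative (A t ** \<Phi> t)) (at t within {0..}) \<and> invertible (\<Phi> t))"

definition exp_dichotomy ::
  "(real^'n \<Rightarrow> real) \<Rightarrow> (real \<Rightarrow> real^'n^'n) \<Rightarrow> real \<Rightarrow> real \<Rightarrow> bool" where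
  "exp_dichotomy nrm A N lam \<longleftrightarrow> 0 < N \<and> 0 < lam \<and>
     (\<exists>\<Phi> P. fundamental_matrix A \<Phi> \<and>
       (let T = (\<lambda>t s. \<Phi> t ** matrix_inv (\<Phi> s)) in
        (\<forall>t\<ge>0. P t ** P t = P t) \<and>
        (\<forall>t\<ge>0. \<forall>s\<ge>0. P t ** T t s = T t s ** P s) \<and>
        (\<forall>t s. 0 \<le> s \<and> s \<le> t \<longrightarrow> mat_norm nrm (T t s ** P s) \<le> N * exp (- lam * (t - s))) \<and>
        (\<forall>t s. 0 \<le> t \<and> t \<le> s \<longrightarrow> mat_norm nrm (T t s ** (mat 1 - P s)) \<le> N * exp (- lam * (s - t)))))"

end

theory Submission
  imports Defs
begin

text \<open>Let \<open>y\<close> be a pseudosolution with defect \<open>h = y' - (A y + f(t, y))\<close>, \<open>nrm h \<le> \<epsilon>\<close>,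
  and look for a solution \<open>x = y + z\<close>: then \<open>z' = A z + g(t, z)\<close> with
  \<open>g(t, z) = f(t, y + z) - f(t, y) - h\<close>. The exponential dichotomy yields a Green operator
  sending every continuous \<open>G\<close> with \<open>nrm G \<le> M\<close> to a solution of \<open>z' = A z + G\<close> bounded by
  \<open>2 N M / \<lambda>\<close>. As long as \<open>nrm z \<le> \<rho> \<le> \<delta>\<close>, the point \<open>y + z\<close> stays in the
  \<open>\<delta>\<close>-neighbourhood of \<open>H\<close>, where \<open>f\<close> is \<open>L\<close>-Lipschitz; so for
  \<open>\<rho> = \<kappa> \<epsilon>\<close>, \<open>\<kappa> = (2 N / \<lambda>) / (1 - 2 N L / \<lambda>)\<close>, the map \<open>z \<mapsto> Green (g(\<cdot>, z))\<close> sends the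
  continuous functions with \<open>nrm z \<le> \<rho>\<close> into themselves (as \<open>2 N (L \<rho> + \<epsilon>) / \<lambda> = \<rho>\<close>) and
  contracts the sup-distance by the factor \<open>2 N L / \<lambda> < 1\<close>. Its fixed point gives the shadowing
  solution, and \<open>\<epsilon>\<^sub>0 = \<delta> / \<kappa>\<close> ensures \<open>\<rho> \<le> \<delta>\<close>.\<close>

section \<open>Arbitrary norms on \<open>real^'n\<close>\<close>

lemma is_norm_nonneg: "is_norm nrm \<Longrightarrow> 0 \<le> nrm x"
  and is_norm_eq_0: "is_norm nrm \<Longrightarrow> nrm x = 0 \<longleftrightarrow> x = 0"
  and is_norm_scaleR: "is_norm nrm \<Longrightarrow> nrm (c *\<^sub>R x) = \<bar>c\<bar> * nrm x"
  and is_norm_triangle: "is_norm nrm \<Longrightarrow> nrm (x + y) \<le> nrm x + nrm y"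
  unfolding is_norm_def by blast+

lemma is_norm_0: "is_norm nrm \<Longrightarrow> nrm 0 = 0"
  by (simp add: is_norm_eq_0)

lemma is_norm_pos: "is_norm nrm \<Longrightarrow> x \<noteq> 0 \<Longrightarrow> 0 < nrm x"
  by (metis is_norm_eq_0 is_norm_nonneg order_le_less)

lemma is_norm_minus: "is_norm nrm \<Longrightarrow> nrm (- x) = nrm x"
  using is_norm_scaleR[of nrm "-1" x] by simp

lemma is_norm_minus_commute: "is_norm nrm \<Longrightarrow> nrm (x - y) = nrm (y - x)"
  using is_norm_minus[of nrm "x - y"] by simp

lemma is_norm_triangle_diff: "is_norm nrm \<Longrightarrow> nrm (x - y) \<le> nrm x + nrm y"
  using is_norm_triangle[of nrm x "- y"] is_norm_minus[of nrm y] by simp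

lemma is_norm_sum_le:
  assumes "is_norm nrm" "finite S"
  shows "nrm (sum g S) \<le> (\<Sum>i\<in>S. nrm (g i))"
  using assms(2)
proof (induction S rule: finite_induct)
  case (insert x F)
  then show ?case using is_norm_triangle[OF assms(1), of "g x" "sum g F"] by simp
qed (simp add: is_norm_0[OF assms(1)])

lemma is_norm_le_norm:
  fixes nrm :: "real^'n \<Rightarrow> real"
  assumes nrm: "is_norm nrm"
  obtains c where "c > 0" "\<And>x. nrm x \<le> c * norm x"
proof
  define b where "b = (\<Sum>i\<in>UNIV. nrm (axis i (1::real)))"
  have b0: "0 \<le> b"
    unfolding b_def by (rule sum_nonneg) (use is_norm_nonneg[OF nrm] in auto)
  show "1 + b > 0" using b0 by simp
  fix x :: "real^'n"
  have "nrm x = nrm (\<Sum>i\<in>UNIV. x$i *\<^sub>R axis i 1)"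
    using basis_expansion[of x] by (simp add: scalar_mult_eq_scaleR)
  also have "\<dots> \<le> (\<Sum>i\<in>UNIV. \<bar>x$i\<bar> * nrm (axis i 1))"
    using is_norm_sum_le[OF nrm finite, of "\<lambda>i. x$i *\<^sub>R axis i 1"]
    by (simp add: is_norm_scaleR[OF nrm])
  also have "\<dots> \<le> (\<Sum>i\<in>UNIV. norm x * nrm (axis i 1))"
    by (intro sum_mono mult_right_mono) (auto simp: component_le_norm_cart is_norm_nonneg[OF nrm])
  also have "\<dots> \<le> (1 + b) * norm x"
    using b0 by (simp add: b_def sum_distrib_left[symmetric] algebra_simps)
  finally show "nrm x \<le> (1 + b) * norm x" .
qed

lemma continuous_on_is_norm:
  fixes nrm :: "real^'n \<Rightarrow> real"
  assumes nrm: "is_norm nrm"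
  shows "continuous_on S nrm"
proof -
  obtain c where c: "c > 0" "\<And>x. nrm x \<le> c * norm x" using is_norm_le_norm[OF nrm] by blast
  have "\<bar>nrm x - nrm y\<bar> \<le> c * norm (x - y)" for x y
    using is_norm_triangle[OF nrm, of "x - y" y] is_norm_triangle[OF nrm, of "y - x" x]
      c(2)[of "x - y"] c(2)[of "y - x"] by (simp add: norm_minus_commute)
  then have "c-lipschitz_on S nrm"
    using c(1) by (intro lipschitz_onI) (auto simp: dist_norm dist_real_def)
  then show ?thesis by (rule lipschitz_on_continuous_on)
qed

lemma norm_le_is_norm:
  fixes nrm :: "real^'n \<Rightarrow> real"
  assumes nrm: "is_norm nrm"
  obtains C where "C > 0" "\<And>x. norm x \<le> C * nrm x"
proof -
  have "axis undefined (1::real) \<in> sphere (0::real^'n) 1" by simp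
  then obtain x0 where x0: "x0 \<in> sphere (0::real^'n) 1" "\<And>y. y \<in> sphere 0 1 \<Longrightarrow> nrm x0 \<le> nrm y"
    using continuous_attains_inf[OF compact_sphere _ continuous_on_is_norm[OF nrm]] by blast
  have m: "nrm x0 > 0" using x0(1) is_norm_pos[OF nrm, of x0] by fastforce
  show ?thesis
  proof
    show "1 / nrm x0 > 0" using m by simp
    fix x :: "real^'n"
    show "norm x \<le> 1 / nrm x0 * nrm x"
    proof (cases "x = 0")
      case False
      then have "nrm x0 \<le> nrm ((1 / norm x) *\<^sub>R x)" by (intro x0(2)) simp
      then show ?thesis using m False by (simp add: is_norm_scaleR[OF nrm] field_simps)
    qed (simp add: is_norm_0[OF nrm])
  qed
qed

lemma is_norm_tendsto:
  fixes nrm :: "real^'n \<Rightarrow> real"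
  assumes "is_norm nrm" "(X \<longlongrightarrow> x) F"
  shows "((\<lambda>n. nrm (X n)) \<longlongrightarrow> nrm x) F"
  using continuous_on_is_norm[OF assms(1), of UNIV] assms(2)
  by (simp add: continuous_on_eq_continuous_at isCont_tendsto_compose)

lemma continuous_on_is_norm_comp:
  fixes nrm :: "real^'n \<Rightarrow> real"
  assumes "is_norm nrm" "continuous_on U f"
  shows "continuous_on U (\<lambda>s. nrm (f s))"
  using continuous_on_compose[OF assms(2) continuous_on_is_norm[OF assms(1)]] by (simp add: o_def)

lemma is_norm_mat_norm_le:
  fixes nrm :: "real^'n \<Rightarrow> real"
  assumes nrm: "is_norm nrm"
  shows "nrm (M *v x) \<le> mat_norm nrm M * nrm x"
proof -
  obtain c where c: "c > 0" "\<And>x. nrm x \<le> c * norm x" using is_norm_le_norm[OF nrm] by blast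
  obtain C where C: "C > 0" "\<And>x. norm x \<le> C * nrm x" using norm_le_is_norm[OF nrm] by blast
  obtain K where K: "K > 0" "\<And>x. norm (M *v x) \<le> norm x * K"
    using bounded_linear.pos_bounded[OF matrix_vector_mul_bounded_linear[of M]] by blast
  have bdd: "bdd_above ((\<lambda>x. nrm (M *v x)) ` {x. nrm x \<le> 1})"
  proof (rule bdd_aboveI2)
    fix x :: "real^'n" assume "x \<in> {x. nrm x \<le> 1}"
    then have "C * nrm x \<le> C" using C(1) by (intro mult_left_le) auto
    then have "norm x \<le> C" using C(2)[of x] by linarith
    have "nrm (M *v x) \<le> c * (norm x * K)"
      using c(2)[of "M *v x"] mult_left_mono[OF K(2)[of x], of c] c(1) by linarith
    also have "\<dots> \<le> c * (C * K)"
      using \<open>norm x \<le> C\<close> c(1) K(1) by (intro mult_left_mono mult_right_mono) auto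
    finally show "nrm (M *v x) \<le> c * (C * K)" .
  qed
  show ?thesis
  proof (cases "x = 0")
    case False
    then have p: "nrm x > 0" by (rule is_norm_pos[OF nrm])
    have "nrm (M *v ((1 / nrm x) *\<^sub>R x)) \<le> mat_norm nrm M"
      unfolding mat_norm_def using p by (intro cSUP_upper bdd) (simp add: is_norm_scaleR[OF nrm])
    then show ?thesis
      using p by (simp add: matrix_vector_mult_scaleR is_norm_scaleR[OF nrm] field_simps)
  qed (simp add: is_norm_0[OF nrm])
qed

lemma is_norm_supporting_functional:
  fixes nrm :: "real^'n \<Rightarrow> real"
  assumes nrm: "is_norm nrm"
  obtains w where "w \<bullet> v = nrm v" "\<And>u. w \<bullet> u \<le> nrm u"
proof (cases "v = 0")
  case True
  then show ?thesis using that[of 0] by (simp add: is_norm_0[OF nrm] is_norm_nonneg[OF nrm])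
next
  case False
  then have p: "nrm v > 0" by (rule is_norm_pos[OF nrm])
  define B where "B = {u. nrm u < nrm v}"
  have "convex B" unfolding B_def convex_def
  proof (intro allI impI ballI, clarsimp)
    fix x y :: "real^'n" and a b :: real
    assume xy: "nrm x < nrm v" "nrm y < nrm v" "0 \<le> a" "0 \<le> b" "a + b = 1"
    have "nrm (a *\<^sub>R x + b *\<^sub>R y) \<le> a * nrm x + b * nrm y"
      using is_norm_triangle[OF nrm] is_norm_scaleR[OF nrm] xy(3,4) by (metis abs_of_nonneg)
    also have "\<dots> < a * nrm v + b * nrm v"
      using xy by (cases "a = 0") (auto intro!: add_less_le_mono mult_strict_left_mono mult_left_mono)
    finally show "nrm (a *\<^sub>R x + b *\<^sub>R y) < nrm v" using xy(5) by (simp flip: distrib_right)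
  qed
  moreover have "B \<inter> {v} = {}" by (simp add: B_def)
  ultimately obtain a b where ab: "a \<noteq> 0" "\<forall>x\<in>B. a \<bullet> x \<le> b" "b \<le> a \<bullet> v"
    using separating_hyperplane_sets[OF _ convex_singleton, of B v] by auto
  have "0 \<in> B" using p by (simp add: B_def is_norm_0[OF nrm])
  then have b0: "0 \<le> b" using ab(2) by force
  have key: "(a \<bullet> u) * nrm v \<le> (a \<bullet> v) * nrm u" for u
  proof (cases "u = 0")
    case False
    then have pu: "nrm u > 0" by (rule is_norm_pos[OF nrm])
    have "(nrm v / nrm u) * (a \<bullet> u) \<le> a \<bullet> v"
    proof (rule field_le_mult_one_interval)
      fix z :: real assume z: "0 < z" "z < 1"
      have "(z * nrm v / nrm u) *\<^sub>R u \<in> B"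
        using z pu p by (simp add: B_def is_norm_scaleR[OF nrm])
      then show "z * (nrm v / nrm u * (a \<bullet> u)) \<le> a \<bullet> v" using ab(2,3) by fastforce
    qed
    then show ?thesis using pu by (simp add: field_simps)
  qed (simp add: is_norm_0[OF nrm])
  have av: "a \<bullet> v > 0"
  proof (rule ccontr)
    assume "\<not> a \<bullet> v > 0"
    then have "a \<bullet> v = 0" using ab(3) b0 by simp
    then have "(a \<bullet> a) * nrm v \<le> 0" using key[of a] by simp
    then have "a \<bullet> a \<le> 0" using p by (simp add: mult_le_0_iff)
    then show False using ab(1) inner_gt_zero_iff[of a] by linarith
  qed
  show ?thesis
  proof (rule that[of "(nrm v / (a \<bullet> v)) *\<^sub>R a"])
    show "(nrm v / (a \<bullet> v)) *\<^sub>R a \<bullet> v = nrm v" using av by simp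
    show "(nrm v / (a \<bullet> v)) *\<^sub>R a \<bullet> u \<le> nrm u" for u
      using key[of u] av by (simp add: divide_le_eq mult.commute)
  qed
qed

lemma is_norm_integral_le:
  fixes nrm :: "real^'n \<Rightarrow> real" and g :: "real \<Rightarrow> real^'n"
  assumes nrm: "is_norm nrm" and "g integrable_on U" "(\<lambda>s. nrm (g s)) integrable_on U"
  shows "nrm (integral U g) \<le> integral U (\<lambda>s. nrm (g s))"
proof -
  obtain w where w: "w \<bullet> integral U g = nrm (integral U g)" "\<And>u. w \<bullet> u \<le> nrm u"
    using is_norm_supporting_functional[OF nrm] by blast
  have "nrm (integral U g) = integral U (\<lambda>s. w \<bullet> g s)"
    using integral_linear[OF assms(2) bounded_linear_inner_right[of w]] w(1) by (simp add: o_def)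
  also have "\<dots> \<le> integral U (\<lambda>s. nrm (g s))"
    using integrable_linear[OF assms(2) bounded_linear_inner_right[of w]] assms(3) w(2)
    by (intro integral_le) (auto simp: o_def)
  finally show ?thesis .
qed

lemma invertible_matrix_inv:
  fixes M :: "real^'n^'n"
  assumes "invertible M"
  shows "M ** matrix_inv M = mat 1" "matrix_inv M ** M = mat 1"
proof -
  have "\<exists>M'. M ** M' = mat 1 \<and> M' ** M = mat 1" using assms unfolding invertible_def by blast
  then have "M ** matrix_inv M = mat 1 \<and> matrix_inv M ** M = mat 1"
    unfolding matrix_inv_def by (rule someI_ex)
  then show "M ** matrix_inv M = mat 1" "matrix_inv M ** M = mat 1" by auto
qed

lemma bounded_bilinear_matrix_vector_mult:
  "bounded_bilinear (\<lambda>(M::real^'n^'m) x. M *v x)"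
proof (rule bounded_bilinear.intro)
  have "norm (M *v x) \<le> norm M * norm x * (real CARD('m) * real CARD('n))" for M :: "real^'n^'m" and x
  proof -
    have "norm (M *v x) \<le> onorm ((*v) M) * norm x"
      by (rule onorm) simp
    also have "onorm ((*v) M) \<le> (\<Sum>i\<in>UNIV. \<Sum>j\<in>UNIV. \<bar>M $ i $ j\<bar>)"
      by (rule onorm_le_matrix_component_sum)
    also have "\<dots> \<le> (\<Sum>i\<in>(UNIV::'m set). \<Sum>j\<in>(UNIV::'n set). norm M)"
      by (intro sum_mono order_trans[OF component_le_norm_cart Finite_Cartesian_Product.norm_nth_le])
    finally show ?thesis by (simp add: mult_right_mono algebra_simps)
  qed
  then show "\<exists>K. \<forall>M x. norm ((M::real^'n^'m) *v x) \<le> norm M * norm x * K" by blast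
qed (auto simp: algebra_simps scaleR_matrix_vector_assoc)

lemma continuous_on_matrix_vector_mult_const:
  fixes M :: "real^'n^'m"
  assumes "continuous_on U f"
  shows "continuous_on U (\<lambda>s. M *v f s)"
  using bounded_linear.continuous_on[OF matrix_vector_mul_bounded_linear[of M] assms] by simp

lemma continuous_on_det:
  fixes M :: "real \<Rightarrow> real^'n^'n"
  assumes "continuous_on U M"
  shows "continuous_on U (\<lambda>s. det (M s))"
  unfolding det_def by (intro continuous_intros continuous_on_component assms)

lemma continuous_on_matrix_inv_mult:
  fixes M :: "real \<Rightarrow> real^'n^'n"
  assumes M: "continuous_on U M" "\<And>s. s \<in> U \<Longrightarrow> invertible (M s)" and v: "continuous_on U v"
  shows "continuous_on U (\<lambda>s. matrix_inv (M s) *v v s)"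
proof -
  have det_nz: "\<And>s. s \<in> U \<Longrightarrow> det (M s) \<noteq> 0" using M(2) invertible_det_nz by blast
  \<comment> \<open>By Cramer's rule the entries are quotients of continuous determinants.\<close>
  have "matrix_inv (M s) *v v s = (\<chi> k. det (\<chi> i j. if j = k then v s $ i else M s $ i $ j) / det (M s))"
    if "s \<in> U" for s
  proof -
    have "M s *v (matrix_inv (M s) *v v s) = v s"
      using invertible_matrix_inv(1)[OF M(2)[OF that]] by (simp add: matrix_vector_mul_assoc)
    then show ?thesis using cramer[OF det_nz[OF that]] by blast
  qed
  moreover have "continuous_on U (\<lambda>s. if j = k then v s $ i else M s $ i $ j)" for i j k
    by (cases "j = k") (auto intro!: continuous_on_component M(1) v)
  then have "continuous_on U (\<lambda>s. \<chi> k. det (\<chi> i j. if j = k then v s $ i else M s $ i $ j) / det (M s))"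
    using det_nz by (intro continuous_on_vec_lambda continuous_on_divide continuous_on_det M(1)) auto
  ultimately show ?thesis using continuous_on_cong by force
qed

lemma integrable_on_exp_decay:
  fixes f :: "real \<Rightarrow> 'b::euclidean_space"
  assumes "continuous_on U f" "U \<in> sets lebesgue" "U \<subseteq> {a..}" "0 < lam"
    and "\<And>s. s \<in> U \<Longrightarrow> norm (f s) \<le> B * exp (- lam * s)"
  shows "f integrable_on U"
proof -
  have "(\<lambda>s::real. exp (- lam * s)) integrable_on {a..}"
    using has_integral_exp_minus_to_infinity[OF assms(4)] by blast
  then have "(\<lambda>s::real. exp (- lam * s)) absolutely_integrable_on U"
    by (intro set_integrable_subset[OF nonnegative_absolutely_integrable_1]) (use assms in auto)
  then have "(\<lambda>s::real. B * exp (- lam * s)) integrable_on U"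
    using set_integrable_mult_right set_lebesgue_integral_eq_integral(1) by blast
  then have "f absolutely_integrable_on U"
    using measurable_bounded_by_integrable_imp_absolutely_integrable[OF
          continuous_imp_measurable_on_sets_lebesgue[OF assms(1,2)] assms(2)] assms(5) by blast
  then show ?thesis using set_lebesgue_integral_eq_integral(1) by blast
qed

lemma integral_exp_decay_upto_le:
  fixes c lam t :: real
  assumes "0 \<le> t" "0 \<le> c" "0 < lam"
  shows "(\<lambda>s. c * exp (- lam * (t - s))) integrable_on {0..t}"
    and "integral {0..t} (\<lambda>s. c * exp (- lam * (t - s))) \<le> c / lam"
proof -
  have hi: "((\<lambda>s. c * exp (- lam * (t - s))) has_integral
      c * exp (- lam * (t - t)) / lam - c * exp (- lam * (t - 0)) / lam) {0..t}"
    using assms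
    by (intro fundamental_theorem_of_calculus[of 0 t "\<lambda>s. c * exp (- lam * (t - s)) / lam"])
      (auto intro!: derivative_eq_intros simp flip: has_real_derivative_iff_has_vector_derivative)
  then show "(\<lambda>s. c * exp (- lam * (t - s))) integrable_on {0..t}" by blast
  show "integral {0..t} (\<lambda>s. c * exp (- lam * (t - s))) \<le> c / lam"
    using integral_unique[OF hi] assms by simp
qed

lemma has_integral_exp_decay_from:
  fixes c lam t :: real
  assumes "0 < lam"
  shows "((\<lambda>s. c * exp (- lam * (s - t))) has_integral c / lam) {t..}"
proof -
  have "((\<lambda>s. (c * exp (lam * t)) * exp (- lam * s)) has_integral
      (c * exp (lam * t)) * (exp (- lam * t) / lam)) {t..}"
    using has_integral_mult_right[OF has_integral_exp_minus_to_infinity[OF assms]] .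
  moreover have e1: "(\<lambda>s. (c * exp (lam * t)) * exp (- lam * s)) = (\<lambda>s. c * exp (- lam * (s - t)))"
    by (simp add: algebra_simps flip: exp_add)
  moreover have e2: "(c * exp (lam * t)) * (exp (- lam * t) / lam) = c / lam"
    by (simp add: mult.assoc flip: exp_add)
  ultimately show ?thesis by (simp only: e1 e2)
qed

lemma Itau_cases:
  assumes "0 < \<tau>"
  obtains r where "0 < r" "Itau \<tau> = {0..<r}" | "Itau \<tau> = {0..}"
proof (cases \<tau>)
  case (real r)
  then show ?thesis using assms that(1)[of r] by (auto simp: Itau_def set_eq_iff)
qed (use assms that(2) in \<open>auto simp: Itau_def set_eq_iff\<close>)

lemma Itau_lebesgue: "Itau \<tau> \<in> sets lebesgue"
proof -
  have "Itau \<tau> \<in> sets borel" unfolding Itau_def by measurable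
  then show ?thesis by simp
qed

lemma Itau_0: "0 < \<tau> \<Longrightarrow> 0 \<in> Itau \<tau>"
  by (erule Itau_cases) simp_all

lemma Itau_nonneg: "Itau \<tau> \<subseteq> {0..}"
  by (auto simp: Itau_def)

lemma Itau_atLeastAtMost_subset: "t \<in> Itau \<tau> \<Longrightarrow> {0..t} \<subseteq> Itau \<tau>"
  by (auto simp: Itau_def) (meson ereal_less_eq(3) order_le_less_trans)

lemma Itau_right_nhd:
  assumes "0 < \<tau>" "t \<in> Itau \<tau>"
  obtains b where "t < b" "{0..b} \<subseteq> Itau \<tau>"
proof (cases rule: Itau_cases[OF assms(1)])
  case (1 r)
  then have "t < r" using assms(2) by simp
  moreover have "{0..(t + r) / 2} \<subseteq> {0..<r}" using \<open>t < r\<close> by auto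
  ultimately show ?thesis using that[of "(t + r) / 2"] 1(2) by simp
next
  case 2
  then show ?thesis using that[of "t + 1"] by simp
qed

lemma Itau_inter_atLeast_lebesgue: "Itau \<tau> \<inter> {t..} \<in> sets lebesgue"
  by (intro sets.Int Itau_lebesgue) (simp add: borel_closed)

section \<open>Contractions on balls of continuous functions\<close>

definition continuous_cball ::
  "(real^'n \<Rightarrow> real) \<Rightarrow> 'a::topological_space set \<Rightarrow> real \<Rightarrow> ('a \<Rightarrow> real^'n) set" where
  "continuous_cball nrm S r = {z. continuous_on S z \<and> (\<forall>s\<in>S. nrm (z s) \<le> r)}"

lemma continuous_cball_radius_nonneg:
  assumes "is_norm nrm" "z \<in> continuous_cball nrm S r" "s \<in> S"
  shows "0 \<le> r"
  using assms(2,3) is_norm_nonneg[OF assms(1), of "z s"] by (auto simp: continuous_cball_def)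

lemma uniform_limit_geometric_Cauchy:
  fixes X :: "nat \<Rightarrow> 'a \<Rightarrow> real^'n"
  assumes nrm: "is_norm nrm" and q: "0 \<le> q" "q < 1" and B: "0 \<le> B"
    and Cauchy: "\<And>m k s. k \<le> m \<Longrightarrow> s \<in> S \<Longrightarrow> nrm (X m s - X k s) \<le> B * q ^ k"
  shows "\<exists>z. uniform_limit S X z sequentially \<and> (\<forall>s\<in>S. \<forall>k. nrm (z s - X k s) \<le> B * q ^ k)"
proof -
  obtain C where C: "C > 0" "\<And>x. norm x \<le> C * nrm x" using norm_le_is_norm[OF nrm] by blast
  have "uniformly_Cauchy_on S X"
  proof (rule uniformly_Cauchy_onI')
    fix e :: real assume "e > 0"
    have "(\<lambda>k. C * B * q ^ k) \<longlonglongrightarrow> 0"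
      by (intro tendsto_mult_right_zero LIMSEQ_power_zero) (use q in simp)
    from order_tendstoD(2)[OF this \<open>e > 0\<close>]
    obtain K where K: "\<And>k. k \<ge> K \<Longrightarrow> C * B * q ^ k < e"
      by (auto simp: eventually_sequentially)
    have "dist (X m s) (X n s) < e" if "s \<in> S" "K \<le> m" "m < n" for s m n
    proof -
      have "dist (X m s) (X n s) \<le> C * nrm (X n s - X m s)"
        using C(2)[of "X n s - X m s"] by (simp add: dist_norm norm_minus_commute)
      also have "\<dots> \<le> C * (B * q ^ m)"
        using Cauchy[of m n s] that C(1) by (intro mult_left_mono) auto
      also have "\<dots> < e" using K[OF that(2)] by (simp only: mult.assoc)
      finally show ?thesis .
    qed
    then show "\<exists>M. \<forall>s\<in>S. \<forall>m\<ge>M. \<forall>n>m. dist (X m s) (X n s) < e" by blast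
  qed
  then have "uniformly_convergent_on S X" by (rule Cauchy_uniformly_convergent)
  then obtain z where z: "uniform_limit S X z sequentially"
    unfolding uniformly_convergent_on_def by blast
  moreover have "nrm (z s - X k s) \<le> B * q ^ k" if "s \<in> S" for s k
  proof (rule LIMSEQ_le_const2)
    show "(\<lambda>m. nrm (X m s - X k s)) \<longlonglongrightarrow> nrm (z s - X k s)"
      by (intro is_norm_tendsto[OF nrm] tendsto_intros tendsto_uniform_limitI[OF z that])
    show "\<exists>N. \<forall>m\<ge>N. nrm (X m s - X k s) \<le> B * q ^ k" using Cauchy that by blast
  qed
  ultimately show ?thesis by blast
qed

context
  fixes nrm :: "real^'n \<Rightarrow> real" and \<Gamma> :: "('a::topological_space \<Rightarrow> real^'n) \<Rightarrow> 'a \<Rightarrow> real^'n"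
    and S :: "'a set" and q r :: real
  assumes nrm: "is_norm nrm" and q: "0 \<le> q" "q < 1" and r: "0 \<le> r"
    and maps: "\<And>z. z \<in> continuous_cball nrm S r \<Longrightarrow> \<Gamma> z \<in> continuous_cball nrm S r"
    and contracts: "\<And>a b D t. a \<in> continuous_cball nrm S r \<Longrightarrow> b \<in> continuous_cball nrm S r \<Longrightarrow>
      \<forall>s\<in>S. nrm (a s - b s) \<le> D \<Longrightarrow> t \<in> S \<Longrightarrow> nrm (\<Gamma> a t - \<Gamma> b t) \<le> q * D"
begin

lemma Picard_iterate_in_cball: "(\<Gamma> ^^ n) (\<lambda>_. 0) \<in> continuous_cball nrm S r"
proof (induction n)
  case 0
  show ?case using r by (simp add: continuous_cball_def is_norm_0[OF nrm])
qed (simp add: maps)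

lemma Picard_iterate_geometric:
  assumes "k \<le> m" "s \<in> S"
  shows "nrm ((\<Gamma> ^^ m) (\<lambda>_. 0) s - (\<Gamma> ^^ k) (\<lambda>_. 0) s) \<le> r / (1 - q) * q ^ k"
proof -
  let ?z = "\<lambda>n. (\<Gamma> ^^ n) (\<lambda>_. 0)"
  have successive: "\<forall>s\<in>S. nrm (?z (Suc n) s - ?z n s) \<le> q ^ n * r" for n
  proof (induction n)
    case 0
    show ?case using Picard_iterate_in_cball[of 1] by (simp add: continuous_cball_def)
  next
    case (Suc n)
    show ?case
      using contracts[OF Picard_iterate_in_cball Picard_iterate_in_cball Suc] by (simp add: mult.assoc)
  qed
  have telescope: "nrm (?z m s - ?z k s) \<le> r * (q ^ k - q ^ m) / (1 - q)"
    using assms(1)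
  proof (induction m rule: dec_induct)
    case (step m)
    have "nrm (?z (Suc m) s - ?z k s) \<le> nrm (?z (Suc m) s - ?z m s) + nrm (?z m s - ?z k s)"
      using is_norm_triangle[OF nrm, of "?z (Suc m) s - ?z m s" "?z m s - ?z k s"] by simp
    also have "\<dots> \<le> q ^ m * r + r * (q ^ k - q ^ m) / (1 - q)"
      using step.IH successive[of m] assms(2) by (intro add_mono) auto
    also have "\<dots> = r * (q ^ k - q ^ Suc m) / (1 - q)"
      using q by (simp add: field_simps)
    finally show ?case .
  qed (simp add: is_norm_0[OF nrm])
  have "r * (q ^ k - q ^ m) / (1 - q) = r / (1 - q) * q ^ k - r / (1 - q) * q ^ m"
    by (simp add: right_diff_distrib diff_divide_distrib)
  moreover have "0 \<le> r / (1 - q) * q ^ m" using q r by simp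
  ultimately show ?thesis using telescope by linarith
qed

lemma contraction_fixpoint_continuous_cball:
  obtains z where "z \<in> continuous_cball nrm S r" "\<And>t. t \<in> S \<Longrightarrow> \<Gamma> z t = z t"
proof -
  let ?B = "continuous_cball nrm S r" and ?z = "\<lambda>n. (\<Gamma> ^^ n) (\<lambda>_. 0)"
  have "0 \<le> r / (1 - q)" using q r by simp
  then have "\<exists>z. uniform_limit S ?z z sequentially \<and>
      (\<forall>s\<in>S. \<forall>k. nrm (z s - ?z k s) \<le> r / (1 - q) * q ^ k)"
    by (rule uniform_limit_geometric_Cauchy[OF nrm q _ Picard_iterate_geometric])
  then obtain z where lim: "uniform_limit S ?z z sequentially"
    and dist: "\<And>s k. s \<in> S \<Longrightarrow> nrm (z s - ?z k s) \<le> r / (1 - q) * q ^ k"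
    by blast
  have z_in: "z \<in> ?B"
    unfolding continuous_cball_def
  proof (intro CollectI conjI ballI)
    show "continuous_on S z"
      using Picard_iterate_in_cball
      by (intro uniform_limit_theorem[OF _ lim]) (auto simp: continuous_cball_def)
    show "nrm (z s) \<le> r" if "s \<in> S" for s
    proof (rule LIMSEQ_le_const2)
      show "(\<lambda>n. nrm (?z n s)) \<longlonglongrightarrow> nrm (z s)"
        by (rule is_norm_tendsto[OF nrm tendsto_uniform_limitI[OF lim that]])
      show "\<exists>N. \<forall>n\<ge>N. nrm (?z n s) \<le> r"
        using Picard_iterate_in_cball that by (auto simp: continuous_cball_def)
    qed
  qed
  have "\<Gamma> z t = z t" if "t \<in> S" for t
  proof -
    obtain C where C: "C > 0" "\<And>x. norm x \<le> C * nrm x" using norm_le_is_norm[OF nrm] by blast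
    define g where "g k = C * (q * (r / (1 - q))) * q ^ k" for k
    have bound: "norm (?z (Suc k) t - \<Gamma> z t) \<le> g k" for k
    proof -
      have "\<forall>s\<in>S. nrm (?z k s - z s) \<le> r / (1 - q) * q ^ k"
        using dist is_norm_minus_commute[OF nrm, of "?z k _"] by simp
      then have "nrm (\<Gamma> (?z k) t - \<Gamma> z t) \<le> q * (r / (1 - q) * q ^ k)"
        by (rule contracts[OF Picard_iterate_in_cball z_in _ that])
      then have "C * nrm (?z (Suc k) t - \<Gamma> z t) \<le> C * (q * (r / (1 - q) * q ^ k))"
        using C(1) by (intro mult_left_mono) auto
      then show ?thesis
        using C(2)[of "?z (Suc k) t - \<Gamma> z t"] by (simp add: g_def algebra_simps)
    qed
    have "g \<longlonglongrightarrow> 0"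
      unfolding g_def by (intro tendsto_mult_right_zero LIMSEQ_power_zero) (use q in simp)
    then have "(\<lambda>k. ?z (Suc k) t - \<Gamma> z t) \<longlonglongrightarrow> 0"
      by (rule Lim_null_comparison[OF always_eventually[OF allI[OF bound]]])
    then have "(\<lambda>k. ?z (Suc k) t) \<longlonglongrightarrow> \<Gamma> z t"
      by (rule LIM_zero_cancel)
    moreover have "(\<lambda>k. ?z (Suc k) t) \<longlonglongrightarrow> z t"
      using LIMSEQ_Suc[OF tendsto_uniform_limitI[OF lim that]] .
    ultimately show ?thesis by (rule LIMSEQ_unique)
  qed
  then show ?thesis using that z_in by blast
qed

end

section \<open>The Green operator of an exponential dichotomy\<close>

locale dichotomy =
  fixes nrm :: "real^'n \<Rightarrow> real" and A \<Phi> P :: "real \<Rightarrow> real^'n^'n"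
    and N lam :: real and \<tau> :: ereal
  assumes nrm: "is_norm nrm"
    and fundamental: "fundamental_matrix A \<Phi>"
    and P_commute: "\<forall>t\<ge>0. \<forall>s\<ge>0. P t ** (\<Phi> t ** matrix_inv (\<Phi> s)) = (\<Phi> t ** matrix_inv (\<Phi> s)) ** P s"
    and stable_decay: "\<forall>t s. 0 \<le> s \<and> s \<le> t \<longrightarrow>
      mat_norm nrm ((\<Phi> t ** matrix_inv (\<Phi> s)) ** P s) \<le> N * exp (- lam * (t - s))"
    and unstable_decay: "\<forall>t s. 0 \<le> t \<and> t \<le> s \<longrightarrow>
      mat_norm nrm ((\<Phi> t ** matrix_inv (\<Phi> s)) ** (mat 1 - P s)) \<le> N * exp (- lam * (s - t))"
    and N_pos: "0 < N" and lam_pos: "0 < lam" and tau_pos: "0 < \<tau>"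
begin

definition \<Psi> :: "real \<Rightarrow> real^'n^'n" where
  "\<Psi> s = matrix_inv (\<Phi> s)"

definition stable_part :: "(real \<Rightarrow> real^'n) \<Rightarrow> real \<Rightarrow> real^'n" where
  "stable_part G s = (\<Psi> s ** P s) *v G s"

definition unstable_part :: "(real \<Rightarrow> real^'n) \<Rightarrow> real \<Rightarrow> real^'n" where
  "unstable_part G s = (\<Psi> s ** (mat 1 - P s)) *v G s"

text \<open>Variation of constants with the Green function of the dichotomy: for continuous \<open>G\<close>
  with \<open>nrm (G s) \<le> M\<close> this is a solution of \<open>x' = A x + G\<close> on \<open>Itau \<tau>\<close>
  bounded by \<open>2 N M / lam\<close>.\<close>
definition green_op :: "(real \<Rightarrow> real^'n) \<Rightarrow> real \<Rightarrow> real^'n" where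
  "green_op G t = \<Phi> t *v (integral {0..t} (stable_part G) - integral (Itau \<tau> \<inter> {t..}) (unstable_part G))"

lemma Phi_has_vector_derivative:
  "0 \<le> t \<Longrightarrow> (\<Phi> has_vector_derivative A t ** \<Phi> t) (at t within {0..})"
  using fundamental unfolding fundamental_matrix_def by blast

lemma Phi_Psi: "0 \<le> s \<Longrightarrow> \<Phi> s ** \<Psi> s = mat 1"
  and Psi_Phi: "0 \<le> s \<Longrightarrow> \<Psi> s ** \<Phi> s = mat 1"
  using fundamental invertible_matrix_inv unfolding fundamental_matrix_def \<Psi>_def by blast+

lemma continuous_on_Phi: "continuous_on {0..} \<Phi>"
  by (rule continuous_on_vector_derivative) (use Phi_has_vector_derivative in auto)

lemma continuous_on_Psi_mult:
  assumes "continuous_on U G" "U \<subseteq> {0..}"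
  shows "continuous_on U (\<lambda>s. \<Psi> s *v G s)"
  unfolding \<Psi>_def
proof (rule continuous_on_matrix_inv_mult[OF _ _ assms(1)])
  show "continuous_on U \<Phi>" using continuous_on_subset[OF continuous_on_Phi assms(2)] .
  show "\<And>s. s \<in> U \<Longrightarrow> invertible (\<Phi> s)"
    using fundamental assms(2) unfolding fundamental_matrix_def by auto
qed

text \<open>The invariance of the projections makes \<open>P s\<close> conjugate to \<open>P 0\<close>, so the stable
  part depends continuously on \<open>s\<close>.\<close>
lemma Psi_P_eq:
  assumes "0 \<le> s"
  shows "\<Psi> s ** P s = (\<Psi> 0 ** P 0 ** \<Phi> 0) ** \<Psi> s"
proof -
  have comm: "P s ** (\<Phi> s ** \<Psi> 0) = (\<Phi> s ** \<Psi> 0) ** P 0"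
    using P_commute assms unfolding \<Psi>_def by auto
  have "(\<Phi> s ** \<Psi> 0) ** (\<Phi> 0 ** \<Psi> s) = \<Phi> s ** ((\<Psi> 0 ** \<Phi> 0) ** \<Psi> s)"
    by (simp only: matrix_mul_assoc)
  also have "\<dots> = mat 1"
    using Psi_Phi[of 0] Phi_Psi[OF assms] by simp
  finally have id: "(\<Phi> s ** \<Psi> 0) ** (\<Phi> 0 ** \<Psi> s) = mat 1" .
  have "\<Psi> s ** P s = (\<Psi> s ** P s) ** ((\<Phi> s ** \<Psi> 0) ** (\<Phi> 0 ** \<Psi> s))"
    by (simp add: id)
  also have "\<dots> = \<Psi> s ** (P s ** (\<Phi> s ** \<Psi> 0)) ** (\<Phi> 0 ** \<Psi> s)"
    by (simp only: matrix_mul_assoc)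
  also have "\<dots> = \<Psi> s ** ((\<Phi> s ** \<Psi> 0) ** P 0) ** (\<Phi> 0 ** \<Psi> s)"
    by (simp only: comm)
  also have "\<dots> = (\<Psi> s ** \<Phi> s) ** (\<Psi> 0 ** P 0 ** \<Phi> 0) ** \<Psi> s"
    by (simp only: matrix_mul_assoc)
  also have "\<dots> = (\<Psi> 0 ** P 0 ** \<Phi> 0) ** \<Psi> s"
    using Psi_Phi[OF assms] by simp
  finally show ?thesis .
qed

lemma stable_part_eq: "0 \<le> s \<Longrightarrow> stable_part G s = (\<Psi> 0 ** P 0 ** \<Phi> 0) *v (\<Psi> s *v G s)"
  unfolding stable_part_def by (subst Psi_P_eq) (simp_all only: matrix_vector_mul_assoc)

lemma stable_plus_unstable: "stable_part G s + unstable_part G s = \<Psi> s *v G s"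
proof -
  have "stable_part G s + unstable_part G s = \<Psi> s *v (P s *v G s + (mat 1 - P s) *v G s)"
    unfolding stable_part_def unstable_part_def
    by (simp only: matrix_vector_mul_assoc matrix_vector_right_distrib)
  also have "P s *v G s + (mat 1 - P s) *v G s = G s"
    by (simp add: matrix_vector_mult_diff_rdistrib)
  finally show ?thesis .
qed

lemma continuous_on_stable_part:
  assumes "continuous_on U G" "U \<subseteq> {0..}"
  shows "continuous_on U (stable_part G)"
  using continuous_on_matrix_vector_mult_const[OF continuous_on_Psi_mult[OF assms]]
  by (rule continuous_on_cong[THEN iffD1, rotated 2]) (use assms(2) stable_part_eq in auto)

lemma continuous_on_unstable_part:
  assumes "continuous_on U G" "U \<subseteq> {0..}"
  shows "continuous_on U (unstable_part G)"
proof -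
  have "unstable_part G = (\<lambda>s. \<Psi> s *v G s - stable_part G s)"
    using stable_plus_unstable by (auto simp: algebra_simps)
  then show ?thesis
    by (simp add: continuous_on_diff continuous_on_Psi_mult continuous_on_stable_part assms)
qed

lemma stable_part_decay:
  assumes "0 \<le> s" "s \<le> t"
  shows "nrm (\<Phi> t *v stable_part G s) \<le> N * exp (- lam * (t - s)) * nrm (G s)"
proof -
  have "\<Phi> t *v stable_part G s = ((\<Phi> t ** \<Psi> s) ** P s) *v G s"
    unfolding stable_part_def by (simp only: matrix_vector_mul_assoc matrix_mul_assoc)
  also have "nrm \<dots> \<le> mat_norm nrm ((\<Phi> t ** \<Psi> s) ** P s) * nrm (G s)"
    by (rule is_norm_mat_norm_le[OF nrm])
  also have "\<dots> \<le> N * exp (- lam * (t - s)) * nrm (G s)"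
    using stable_decay assms by (intro mult_right_mono is_norm_nonneg[OF nrm]) (auto simp: \<Psi>_def)
  finally show ?thesis .
qed

lemma unstable_part_decay:
  assumes "0 \<le> t" "t \<le> s"
  shows "nrm (\<Phi> t *v unstable_part G s) \<le> N * exp (- lam * (s - t)) * nrm (G s)"
proof -
  have "\<Phi> t *v unstable_part G s = ((\<Phi> t ** \<Psi> s) ** (mat 1 - P s)) *v G s"
    unfolding unstable_part_def by (simp only: matrix_vector_mul_assoc matrix_mul_assoc)
  also have "nrm \<dots> \<le> mat_norm nrm ((\<Phi> t ** \<Psi> s) ** (mat 1 - P s)) * nrm (G s)"
    by (rule is_norm_mat_norm_le[OF nrm])
  also have "\<dots> \<le> N * exp (- lam * (s - t)) * nrm (G s)"
    using unstable_decay assms by (intro mult_right_mono is_norm_nonneg[OF nrm]) (auto simp: \<Psi>_def)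
  finally show ?thesis .
qed

lemma norm_Phi_unstable_part_le_exp:
  assumes G: "G \<in> continuous_cball nrm (Itau \<tau>) M" and s: "s \<in> Itau \<tau>" and "0 \<le> r" "r \<le> s"
  shows "nrm (\<Phi> r *v unstable_part G s) \<le> N * M * exp (lam * r) * exp (- lam * s)"
proof -
  have "nrm (\<Phi> r *v unstable_part G s) \<le> N * exp (- lam * (s - r)) * nrm (G s)"
    by (rule unstable_part_decay) fact+
  also have "\<dots> \<le> N * exp (- lam * (s - r)) * M"
    using G s N_pos by (intro mult_left_mono) (auto simp: continuous_cball_def)
  also have "\<dots> = N * M * exp (lam * r) * exp (- lam * s)"
    by (simp add: algebra_simps flip: exp_add)
  finally show ?thesis .
qed

lemma continuous_on_unstable_part_atLeast:
  assumes "G \<in> continuous_cball nrm (Itau \<tau>) M"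
  shows "continuous_on (Itau \<tau> \<inter> {t..}) (unstable_part G)"
  using assms continuous_on_subset[of "Itau \<tau>" G "Itau \<tau> \<inter> {t..}"] Itau_nonneg[of \<tau>]
  by (intro continuous_on_unstable_part) (auto simp: continuous_cball_def)

lemma integrable_unstable_part:
  assumes G: "G \<in> continuous_cball nrm (Itau \<tau>) M"
  shows "unstable_part G integrable_on (Itau \<tau> \<inter> {t..})"
proof -
  obtain C where C: "C > 0" "\<And>x. norm x \<le> C * nrm x" using norm_le_is_norm[OF nrm] by blast
  obtain K where K: "K > 0" "\<And>x. norm (\<Psi> 0 *v x) \<le> norm x * K"
    using bounded_linear.pos_bounded[OF matrix_vector_mul_bounded_linear[of "\<Psi> 0"]] by blast
  show ?thesis
  proof (rule integrable_on_exp_decay[OF continuous_on_unstable_part_atLeast[OF G]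
        Itau_inter_atLeast_lebesgue _ lam_pos])
    fix s assume s: "s \<in> Itau \<tau> \<inter> {t..}"
    then have s0: "0 \<le> s" using Itau_nonneg by auto
    have "unstable_part G s = \<Psi> 0 *v (\<Phi> 0 *v unstable_part G s)"
      using Psi_Phi[of 0] by (simp add: matrix_vector_mul_assoc)
    then have "norm (unstable_part G s) = norm (\<Psi> 0 *v (\<Phi> 0 *v unstable_part G s))"
      by (rule arg_cong)
    also have "\<dots> \<le> norm (\<Phi> 0 *v unstable_part G s) * K"
      by (rule K(2))
    also have "\<dots> \<le> C * nrm (\<Phi> 0 *v unstable_part G s) * K"
      using C(2) K(1) by (intro mult_right_mono) auto
    also have "\<dots> \<le> C * (N * M * exp (lam * 0) * exp (- lam * s)) * K"
      using norm_Phi_unstable_part_le_exp[OF G _ order_refl s0] s C(1) K(1)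
      by (intro mult_right_mono mult_left_mono) auto
    finally show "norm (unstable_part G s) \<le> (C * N * M * K) * exp (- lam * s)"
      by (simp add: algebra_simps)
  qed auto
qed

lemma integrable_norm_Phi_unstable_part:
  assumes G: "G \<in> continuous_cball nrm (Itau \<tau>) M" and t: "0 \<le> t"
  shows "(\<lambda>s. nrm (\<Phi> t *v unstable_part G s)) integrable_on (Itau \<tau> \<inter> {t..})"
proof (rule integrable_on_exp_decay[OF _ Itau_inter_atLeast_lebesgue _ lam_pos])
  show "continuous_on (Itau \<tau> \<inter> {t..}) (\<lambda>s. nrm (\<Phi> t *v unstable_part G s))"
    by (intro continuous_on_is_norm_comp[OF nrm] continuous_on_matrix_vector_mult_const
        continuous_on_unstable_part_atLeast[OF G])
  show "norm (nrm (\<Phi> t *v unstable_part G s)) \<le> N * M * exp (lam * t) * exp (- lam * s)"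
    if "s \<in> Itau \<tau> \<inter> {t..}" for s
    using norm_Phi_unstable_part_le_exp[OF G _ t] that is_norm_nonneg[OF nrm] by auto
qed auto

lemma norm_Phi_integral_stable_part_le:
  assumes G: "G \<in> continuous_cball nrm (Itau \<tau>) M" and t: "t \<in> Itau \<tau>"
  shows "nrm (\<Phi> t *v integral {0..t} (stable_part G)) \<le> N * M / lam"
proof -
  have t0: "0 \<le> t" and sub: "{0..t} \<subseteq> Itau \<tau>"
    using t Itau_nonneg Itau_atLeastAtMost_subset by auto
  have M: "0 \<le> M" by (rule continuous_cball_radius_nonneg[OF nrm G t])
  have "continuous_on {0..t} G"
    using G continuous_on_subset[OF _ sub] by (auto simp: continuous_cball_def)
  then have "continuous_on {0..t} (stable_part G)"
    using t0 by (intro continuous_on_stable_part) auto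
  then have cont: "continuous_on {0..t} (\<lambda>s. \<Phi> t *v stable_part G s)"
    and int: "stable_part G integrable_on {0..t}"
    by (auto intro: continuous_on_matrix_vector_mult_const integrable_continuous_real)
  have "\<Phi> t *v integral {0..t} (stable_part G) = integral {0..t} (\<lambda>s. \<Phi> t *v stable_part G s)"
    using integral_linear[OF int matrix_vector_mul_bounded_linear[of "\<Phi> t"]] by (simp add: o_def)
  also have "nrm \<dots> \<le> integral {0..t} (\<lambda>s. nrm (\<Phi> t *v stable_part G s))"
    by (intro is_norm_integral_le[OF nrm] integrable_continuous_real cont
        continuous_on_is_norm_comp[OF nrm])
  also have "\<dots> \<le> integral {0..t} (\<lambda>s. N * M * exp (- lam * (t - s)))"
  proof (rule integral_le[OF integrable_continuous_real[OF continuous_on_is_norm_comp[OF nrm cont]]])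
    show "(\<lambda>s. N * M * exp (- lam * (t - s))) integrable_on {0..t}"
      using N_pos M by (intro integral_exp_decay_upto_le(1)[OF t0 _ lam_pos]) simp
    fix s assume s: "s \<in> {0..t}"
    have "nrm (\<Phi> t *v stable_part G s) \<le> N * exp (- lam * (t - s)) * nrm (G s)"
      using s by (intro stable_part_decay) auto
    also have "\<dots> \<le> N * exp (- lam * (t - s)) * M"
      using G s sub N_pos by (intro mult_left_mono) (auto simp: continuous_cball_def)
    finally show "nrm (\<Phi> t *v stable_part G s) \<le> N * M * exp (- lam * (t - s))"
      by (simp add: algebra_simps)
  qed
  also have "\<dots> \<le> N * M / lam"
    using N_pos M by (intro integral_exp_decay_upto_le(2)[OF t0 _ lam_pos]) simp
  finally show ?thesis .
qed

lemma norm_Phi_integral_unstable_part_le: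
  assumes G: "G \<in> continuous_cball nrm (Itau \<tau>) M" and t: "t \<in> Itau \<tau>"
  shows "nrm (\<Phi> t *v integral (Itau \<tau> \<inter> {t..}) (unstable_part G)) \<le> N * M / lam"
proof -
  let ?U = "Itau \<tau> \<inter> {t..}"
  have t0: "0 \<le> t" using t Itau_nonneg by auto
  have M: "0 \<le> M" by (rule continuous_cball_radius_nonneg[OF nrm G t])
  note int = integrable_unstable_part[OF G] integrable_norm_Phi_unstable_part[OF G t0]
  have exp_int: "((\<lambda>s. N * M * exp (- lam * (s - t))) has_integral N * M / lam) {t..}"
    by (rule has_integral_exp_decay_from[OF lam_pos])
  have "(\<lambda>s. N * M * exp (- lam * (s - t))) integrable_on ?U"
  proof (rule integrable_on_exp_decay[OF _ Itau_inter_atLeast_lebesgue _ lam_pos])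
    show "norm (N * M * exp (- lam * (s - t))) \<le> N * M * exp (lam * t) * exp (- lam * s)" for s
      using N_pos M by (simp add: algebra_simps flip: exp_add)
  qed (auto intro!: continuous_intros)
  note exp_int_U = this
  have "\<Phi> t *v integral ?U (unstable_part G) = integral ?U (\<lambda>s. \<Phi> t *v unstable_part G s)"
    using integral_linear[OF int(1) matrix_vector_mul_bounded_linear[of "\<Phi> t"]] by (simp add: o_def)
  also have "nrm \<dots> \<le> integral ?U (\<lambda>s. nrm (\<Phi> t *v unstable_part G s))"
    using integrable_linear[OF int(1) matrix_vector_mul_bounded_linear[of "\<Phi> t"]] int(2)
    by (intro is_norm_integral_le[OF nrm]) (simp_all add: o_def)
  also have "\<dots> \<le> integral ?U (\<lambda>s. N * M * exp (- lam * (s - t)))"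
  proof (rule integral_le[OF int(2) exp_int_U])
    fix s assume s: "s \<in> ?U"
    have "nrm (\<Phi> t *v unstable_part G s) \<le> N * exp (- lam * (s - t)) * nrm (G s)"
      using s t0 by (intro unstable_part_decay) auto
    also have "\<dots> \<le> N * exp (- lam * (s - t)) * M"
      using G s N_pos by (intro mult_left_mono) (auto simp: continuous_cball_def)
    finally show "nrm (\<Phi> t *v unstable_part G s) \<le> N * M * exp (- lam * (s - t))"
      by (simp add: algebra_simps)
  qed
  also have "\<dots> \<le> integral {t..} (\<lambda>s. N * M * exp (- lam * (s - t)))"
    using exp_int N_pos M by (intro integral_subset_le[OF _ exp_int_U]) auto
  also have "\<dots> = N * M / lam" by (rule integral_unique[OF exp_int])
  finally show ?thesis .
qed

lemma green_op_bound:
  assumes "G \<in> continuous_cball nrm (Itau \<tau>) M" "t \<in> Itau \<tau>"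
  shows "nrm (green_op G t) \<le> 2 * N * M / lam"
proof -
  have "nrm (green_op G t) \<le> nrm (\<Phi> t *v integral {0..t} (stable_part G))
      + nrm (\<Phi> t *v integral (Itau \<tau> \<inter> {t..}) (unstable_part G))"
    unfolding green_op_def matrix_vector_mult_diff_distrib by (rule is_norm_triangle_diff[OF nrm])
  also have "\<dots> \<le> N * M / lam + N * M / lam"
    by (intro add_mono norm_Phi_integral_stable_part_le norm_Phi_integral_unstable_part_le assms)
  finally show ?thesis by (simp add: field_simps)
qed

lemma green_op_eq:
  assumes G: "G \<in> continuous_cball nrm (Itau \<tau>) M" and u: "u \<in> Itau \<tau>"
  shows "green_op G u = \<Phi> u *v (integral {0..u} (\<lambda>s. \<Psi> s *v G s) - integral (Itau \<tau>) (unstable_part G))"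
proof -
  have u0: "0 \<le> u" and sub: "{0..u} \<subseteq> Itau \<tau>"
    using u Itau_nonneg Itau_atLeastAtMost_subset by auto
  have "continuous_on {0..u} G"
    using G continuous_on_subset[OF _ sub] by (auto simp: continuous_cball_def)
  then have int_stable: "stable_part G integrable_on {0..u}"
    and int_unstable: "unstable_part G integrable_on {0..u}"
    using u0 by (auto intro!: integrable_continuous_real continuous_on_stable_part
        continuous_on_unstable_part)
  have "(unstable_part G has_integral
      integral {0..u} (unstable_part G) + integral (Itau \<tau> \<inter> {u..}) (unstable_part G))
      ({0..u} \<union> (Itau \<tau> \<inter> {u..}))"
    by (intro has_integral_Un integrable_integral int_unstable integrable_unstable_part[OF G]
        negligible_subset[OF negligible_sing[of u]]) auto
  moreover have "{0..u} \<union> (Itau \<tau> \<inter> {u..}) = Itau \<tau>" using sub Itau_nonneg[of \<tau>] by auto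
  ultimately have "integral (Itau \<tau>) (unstable_part G)
      = integral {0..u} (unstable_part G) + integral (Itau \<tau> \<inter> {u..}) (unstable_part G)"
    by (simp add: integral_unique)
  moreover have "integral {0..u} (\<lambda>s. \<Psi> s *v G s)
      = integral {0..u} (stable_part G) + integral {0..u} (unstable_part G)"
    using Henstock_Kurzweil_Integration.integral_add[OF int_stable int_unstable]
    by (simp add: stable_plus_unstable)
  ultimately show ?thesis unfolding green_op_def by (simp add: algebra_simps)
qed

lemma green_op_has_vector_derivative:
  assumes G: "G \<in> continuous_cball nrm (Itau \<tau>) M" and t: "t \<in> Itau \<tau>"
  shows "(green_op G has_vector_derivative A t *v green_op G t + G t) (at t within Itau \<tau>)"
proof -
  obtain b where b: "t < b" "{0..b} \<subseteq> Itau \<tau>" using Itau_right_nhd[OF tau_pos t] by blast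
  have t0: "0 \<le> t" using t Itau_nonneg by auto
  define W where "W u = integral {0..u} (\<lambda>s. \<Psi> s *v G s) - integral (Itau \<tau>) (unstable_part G)" for u
  have "continuous_on {0..b} G"
    using G continuous_on_subset[OF _ b(2)] by (auto simp: continuous_cball_def)
  then have "continuous_on {0..b} (\<lambda>s. \<Psi> s *v G s)"
    by (rule continuous_on_Psi_mult) auto
  then have "((\<lambda>u. integral {0..u} (\<lambda>s. \<Psi> s *v G s)) has_vector_derivative \<Psi> t *v G t)
      (at t within {0..b})"
    by (rule integral_has_vector_derivative) (use t0 b(1) in auto)
  then have "(W has_vector_derivative \<Psi> t *v G t) (at t within {0..b})"
    unfolding W_def using has_vector_derivative_diff[OF _ has_vector_derivative_const] by fastforce
  moreover have "(\<Phi> has_vector_derivative A t ** \<Phi> t) (at t within {0..b})"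
    by (rule has_vector_derivative_within_subset[OF Phi_has_vector_derivative[OF t0]]) auto
  ultimately have "((\<lambda>u. \<Phi> u *v W u) has_vector_derivative
      \<Phi> t *v (\<Psi> t *v G t) + (A t ** \<Phi> t) *v W t) (at t within {0..b})"
    using bounded_bilinear.has_vector_derivative[OF bounded_bilinear_matrix_vector_mult] by fastforce
  moreover have "\<Phi> t *v (\<Psi> t *v G t) = G t"
    using Phi_Psi[OF t0] by (simp add: matrix_vector_mul_assoc)
  moreover have "(A t ** \<Phi> t) *v W t = A t *v green_op G t"
    using green_op_eq[OF G t] by (simp add: W_def matrix_vector_mul_assoc[symmetric])
  moreover have "at t within {0..b} = at t within Itau \<tau>"
    by (rule at_within_nhd[of t "{..<b}"]) (use b Itau_nonneg[of \<tau>] in auto)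
  ultimately have "((\<lambda>u. \<Phi> u *v W u) has_vector_derivative A t *v green_op G t + G t)
      (at t within Itau \<tau>)"
    by (simp add: add.commute)
  then show ?thesis
    by (rule has_vector_derivative_transform_within[OF _ zero_less_one t])
      (simp add: green_op_eq[OF G] W_def)
qed

lemma continuous_on_green_op:
  "G \<in> continuous_cball nrm (Itau \<tau>) M \<Longrightarrow> continuous_on (Itau \<tau>) (green_op G)"
  by (rule continuous_on_vector_derivative) (rule green_op_has_vector_derivative)

lemma green_op_diff:
  assumes G1: "G1 \<in> continuous_cball nrm (Itau \<tau>) M1"
    and G2: "G2 \<in> continuous_cball nrm (Itau \<tau>) M2" and t: "t \<in> Itau \<tau>"
  shows "green_op G1 t - green_op G2 t = green_op (\<lambda>s. G1 s - G2 s) t"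
proof -
  have t0: "0 \<le> t" and sub: "{0..t} \<subseteq> Itau \<tau>"
    using t Itau_nonneg Itau_atLeastAtMost_subset by auto
  have "continuous_on {0..t} G1" "continuous_on {0..t} G2"
    using G1 G2 continuous_on_subset[OF _ sub] by (auto simp: continuous_cball_def)
  then have "stable_part G1 integrable_on {0..t}" "stable_part G2 integrable_on {0..t}"
    using t0 by (auto intro!: integrable_continuous_real continuous_on_stable_part)
  moreover have "unstable_part G1 integrable_on (Itau \<tau> \<inter> {t..})"
    "unstable_part G2 integrable_on (Itau \<tau> \<inter> {t..})"
    using integrable_unstable_part[OF G1] integrable_unstable_part[OF G2] .
  moreover have "stable_part (\<lambda>s. G1 s - G2 s) = (\<lambda>s. stable_part G1 s - stable_part G2 s)"
    "unstable_part (\<lambda>s. G1 s - G2 s) = (\<lambda>s. unstable_part G1 s - unstable_part G2 s)"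
    by (simp_all add: fun_eq_iff stable_part_def unstable_part_def matrix_vector_mult_diff_distrib)
  ultimately show ?thesis
    by (simp add: green_op_def Henstock_Kurzweil_Integration.integral_diff
        matrix_vector_mult_diff_distrib algebra_simps)
qed

end

lemma exp_dichotomyE:
  assumes "exp_dichotomy nrm A N lam" "is_norm nrm"
  obtains \<Phi> P where "\<And>\<tau>. 0 < \<tau> \<Longrightarrow> dichotomy nrm A \<Phi> P N lam \<tau>"
proof -
  obtain \<Phi> P where "0 < N" "0 < lam" "fundamental_matrix A \<Phi>"
    "\<forall>t\<ge>0. \<forall>s\<ge>0. P t ** (\<Phi> t ** matrix_inv (\<Phi> s)) = (\<Phi> t ** matrix_inv (\<Phi> s)) ** P s"
    "\<forall>t s. 0 \<le> s \<and> s \<le> t \<longrightarrow>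
      mat_norm nrm ((\<Phi> t ** matrix_inv (\<Phi> s)) ** P s) \<le> N * exp (- lam * (t - s))"
    "\<forall>t s. 0 \<le> t \<and> t \<le> s \<longrightarrow>
      mat_norm nrm ((\<Phi> t ** matrix_inv (\<Phi> s)) ** (mat 1 - P s)) \<le> N * exp (- lam * (s - t))"
    using assms(1) unfolding exp_dichotomy_def Let_def by blast
  then show ?thesis
    using assms(2) by (intro that dichotomy.intro) auto
qed

section \<open>Shadowing\<close>

locale shadowing_setup = dichotomy nrm A \<Phi> P N lam \<tau>
  for nrm :: "real^'n \<Rightarrow> real" and A \<Phi> P N lam \<tau> +
  fixes f :: "real \<Rightarrow> real^'n \<Rightarrow> real^'n" and H :: "(real^'n) set" and \<delta> L \<epsilon> :: real
    and y y' :: "real \<Rightarrow> real^'n"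
  assumes A_cont: "continuous_on {0..} A"
    and f_cont: "continuous_on ({0..} \<times> UNIV) (\<lambda>(t, x). f t x)"
    and f_lipschitz: "\<forall>t\<ge>0. \<forall>x1\<in>nbhd_n nrm \<delta> H. \<forall>x2\<in>nbhd_n nrm \<delta> H.
      nrm (f t x1 - f t x2) \<le> L * nrm (x1 - x2)"
    and L_pos: "0 < L" and small_L: "2 * N * L / lam < 1"
    and eps_pos: "0 < \<epsilon>" and radius_le: "2 * N / lam / (1 - 2 * N * L / lam) * \<epsilon> \<le> \<delta>"
    and y_deriv: "\<And>t. t \<in> Itau \<tau> \<Longrightarrow> (y has_vector_derivative y' t) (at t within Itau \<tau>)"
    and y'_cont: "continuous_on (Itau \<tau>) y'"
    and defect: "\<And>t. t \<in> Itau \<tau> \<Longrightarrow> nrm (y' t - (A t *v y t + f t (y t))) \<le> \<epsilon>"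
    and y_in_H: "\<And>t. t \<in> Itau \<tau> \<Longrightarrow> y t \<in> H"
begin

definition q :: real where
  "q = 2 * N * L / lam"

definition \<rho> :: real where
  "\<rho> = 2 * N / lam / (1 - q) * \<epsilon>"

text \<open>\<open>y + z\<close> solves the equation iff \<open>z' = A z + perturb z\<close>.\<close>
definition perturb :: "(real \<Rightarrow> real^'n) \<Rightarrow> real \<Rightarrow> real^'n" where
  "perturb z s = f s (y s + z s) - f s (y s) - (y' s - (A s *v y s + f s (y s)))"

lemma q_nonneg: "0 \<le> q" and q_less_1: "q < 1"
  using N_pos lam_pos L_pos small_L by (simp_all add: q_def)

lemma rho_nonneg: "0 \<le> \<rho>" and rho_le_delta: "\<rho> \<le> \<delta>"
  using N_pos lam_pos q_less_1 eps_pos radius_le by (simp_all add: \<rho>_def q_def)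

lemma green_radius: "2 * N * (L * \<rho> + \<epsilon>) / lam = \<rho>"
  using q_less_1 lam_pos by (simp add: \<rho>_def q_def field_simps)

lemma continuous_on_perturb:
  assumes "continuous_on (Itau \<tau>) z"
  shows "continuous_on (Itau \<tau>) (perturb z)"
proof -
  have y: "continuous_on (Itau \<tau>) y"
    by (rule continuous_on_vector_derivative) (rule y_deriv)
  have f_along: "continuous_on (Itau \<tau>) (\<lambda>s. f s (y s + w s))" if "continuous_on (Itau \<tau>) w" for w
  proof -
    have "continuous_on (Itau \<tau>) (\<lambda>s. (\<lambda>(t, x). f t x) (s, y s + w s))"
    proof (rule continuous_on_compose2[OF f_cont])
      show "continuous_on (Itau \<tau>) (\<lambda>s. (s, y s + w s))" by (intro continuous_intros y that)
      show "(\<lambda>s. (s, y s + w s)) ` Itau \<tau> \<subseteq> {0..} \<times> UNIV" using Itau_nonneg by auto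
    qed
    then show ?thesis by simp
  qed
  have "continuous_on (Itau \<tau>) (\<lambda>s. A s *v y s)"
    using bounded_bilinear.continuous_on[OF bounded_bilinear_matrix_vector_mult
        continuous_on_subset[OF A_cont Itau_nonneg] y] by simp
  then show ?thesis
    unfolding perturb_def
    using f_along[OF assms] f_along[of "\<lambda>_. 0"]
    by (intro continuous_intros y'_cont) auto
qed

lemma perturb_lipschitz:
  assumes s: "s \<in> Itau \<tau>" and "nrm (a s) \<le> \<delta>" "nrm (b s) \<le> \<delta>"
  shows "nrm (perturb a s - perturb b s) \<le> L * nrm (a s - b s)"
proof -
  have nbhd: "y s + w \<in> nbhd_n nrm \<delta> H" if "nrm w \<le> \<delta>" for w
    unfolding nbhd_n_def closed_ball_n_def using that y_in_H[OF s] by (intro UN_I[of "y s"]) auto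
  have "0 \<le> s" using s Itau_nonneg by auto
  then have "nrm (f s (y s + a s) - f s (y s + b s)) \<le> L * nrm ((y s + a s) - (y s + b s))"
    using f_lipschitz nbhd assms(2,3) by blast
  then show ?thesis by (simp add: perturb_def)
qed

lemma perturb_in_cball:
  assumes z: "z \<in> continuous_cball nrm (Itau \<tau>) \<rho>"
  shows "perturb z \<in> continuous_cball nrm (Itau \<tau>) (L * \<rho> + \<epsilon>)"
  unfolding continuous_cball_def
proof (intro CollectI conjI ballI)
  show "continuous_on (Itau \<tau>) (perturb z)"
    using z by (intro continuous_on_perturb) (simp add: continuous_cball_def)
  fix s assume s: "s \<in> Itau \<tau>"
  have zs: "nrm (z s) \<le> \<rho>" using z s by (simp add: continuous_cball_def)
  have "nrm (perturb z s) \<le> nrm (perturb z s - perturb (\<lambda>_. 0) s) + nrm (perturb (\<lambda>_. 0) s)"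
    using is_norm_triangle[OF nrm, of "perturb z s - perturb (\<lambda>_. 0) s" "perturb (\<lambda>_. 0) s"]
    by simp
  also have "\<dots> \<le> L * nrm (z s) + \<epsilon>"
    using perturb_lipschitz[OF s, of z "\<lambda>_. 0"] zs rho_le_delta rho_nonneg defect[OF s]
      is_norm_minus_commute[OF nrm, of "y' s"]
    by (intro add_mono) (auto simp: perturb_def is_norm_0[OF nrm])
  also have "\<dots> \<le> L * \<rho> + \<epsilon>"
    using zs L_pos by simp
  finally show "nrm (perturb z s) \<le> L * \<rho> + \<epsilon>" .
qed

lemma green_op_perturb_in_cball:
  assumes "z \<in> continuous_cball nrm (Itau \<tau>) \<rho>"
  shows "green_op (perturb z) \<in> continuous_cball nrm (Itau \<tau>) \<rho>"
  using green_op_bound[OF perturb_in_cball[OF assms]] continuous_on_green_op[OF perturb_in_cball[OF assms]]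
  unfolding green_radius by (simp add: continuous_cball_def)

lemma green_op_perturb_contracts:
  assumes a: "a \<in> continuous_cball nrm (Itau \<tau>) \<rho>" and b: "b \<in> continuous_cball nrm (Itau \<tau>) \<rho>"
    and D: "\<forall>s\<in>Itau \<tau>. nrm (a s - b s) \<le> D" and t: "t \<in> Itau \<tau>"
  shows "nrm (green_op (perturb a) t - green_op (perturb b) t) \<le> q * D"
proof -
  have "(\<lambda>s. perturb a s - perturb b s) \<in> continuous_cball nrm (Itau \<tau>) (L * D)"
    unfolding continuous_cball_def
  proof (intro CollectI conjI ballI)
    show "continuous_on (Itau \<tau>) (\<lambda>s. perturb a s - perturb b s)"
      using a b by (intro continuous_intros continuous_on_perturb) (auto simp: continuous_cball_def)
    fix s assume s: "s \<in> Itau \<tau>"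
    have "nrm (a s) \<le> \<delta>" "nrm (b s) \<le> \<delta>"
      using a b s rho_le_delta by (auto simp: continuous_cball_def)
    then have "nrm (perturb a s - perturb b s) \<le> L * nrm (a s - b s)"
      by (rule perturb_lipschitz[OF s])
    also have "\<dots> \<le> L * D" using D s L_pos by simp
    finally show "nrm (perturb a s - perturb b s) \<le> L * D" .
  qed
  then have "nrm (green_op (\<lambda>s. perturb a s - perturb b s) t) \<le> 2 * N * (L * D) / lam"
    using green_op_bound t by blast
  then show ?thesis
    using green_op_diff[OF perturb_in_cball[OF a] perturb_in_cball[OF b] t] by (simp add: q_def)
qed

lemma shadowing_solution:
  "\<exists>x. is_solution_on (\<lambda>t x. A t *v x + f t x) \<tau> x \<and> (\<forall>t\<in>Itau \<tau>. nrm (x t - y t) \<le> \<rho>)"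
proof -
  obtain z where z: "z \<in> continuous_cball nrm (Itau \<tau>) \<rho>"
    and fixed: "\<And>t. t \<in> Itau \<tau> \<Longrightarrow> green_op (perturb z) t = z t"
    using contraction_fixpoint_continuous_cball[where \<Gamma> = "\<lambda>z. green_op (perturb z)",
        OF nrm q_nonneg q_less_1 rho_nonneg green_op_perturb_in_cball green_op_perturb_contracts]
    by blast
  have "((\<lambda>s. y s + z s) has_vector_derivative A t *v (y t + z t) + f t (y t + z t)) (at t within Itau \<tau>)"
    if t: "t \<in> Itau \<tau>" for t
  proof -
    have "(green_op (perturb z) has_vector_derivative A t *v z t + perturb z t)
        (at t within Itau \<tau>)"
      using green_op_has_vector_derivative[OF perturb_in_cball[OF z] t] fixed[OF t] by simp
    then have "(z has_vector_derivative A t *v z t + perturb z t) (at t within Itau \<tau>)"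
      by (rule has_vector_derivative_transform_within[OF _ zero_less_one t]) (simp_all add: fixed t)
    from has_vector_derivative_add[OF y_deriv[OF t] this] show ?thesis
      by (simp add: perturb_def matrix_vector_right_distrib algebra_simps)
  qed
  moreover have "\<forall>t\<in>Itau \<tau>. nrm ((y t + z t) - y t) \<le> \<rho>"
    using z by (simp add: continuous_cball_def)
  ultimately show ?thesis
    unfolding is_solution_on_def by blast
qed

end

theorem theorem2:
  fixes nrm :: "real^'n \<Rightarrow> real"
    and H :: "(real^'n) set"
    and A :: "real \<Rightarrow> real^'n^'n"
    and f :: "real \<Rightarrow> real^'n \<Rightarrow> real^'n"
    and N lam \<delta> L :: real
  assumes "is_norm nrm"
    and "H \<noteq> {}"
    and "continuous_on {0..} A"
    and "continuous_on ({0..} \<times> UNIV) (\<lambda>(t, x). f t x)"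
    and "exp_dichotomy nrm A N lam"
    and "0 < \<delta>" and "0 < L"
    and "\<forall>t\<ge>0. \<forall>x1\<in>nbhd_n nrm \<delta> H. \<forall>x2\<in>nbhd_n nrm \<delta> H.
           nrm (f t x1 - f t x2) \<le> L * nrm (x1 - x2)"
    and "L < lam / (2 * N)"
  shows "cond_lipschitz_shadowing nrm (\<lambda>t x. A t *v x + f t x) H"
proof -
  have N: "0 < N" and lam: "0 < lam" using assms(5) unfolding exp_dichotomy_def by auto
  obtain \<Phi> P where dich: "\<And>\<tau>. 0 < \<tau> \<Longrightarrow> dichotomy nrm A \<Phi> P N lam \<tau>"
    using exp_dichotomyE[OF assms(5,1)] by blast
  have small_L: "2 * N * L / lam < 1" using assms(9) N lam by (simp add: field_simps)
  define \<kappa> where "\<kappa> = 2 * N / lam / (1 - 2 * N * L / lam)"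
  have \<kappa>: "0 < \<kappa>" using small_L N lam by (simp add: \<kappa>_def)
  have "\<exists>x. is_solution_on (\<lambda>t x. A t *v x + f t x) \<tau> x \<and> (\<forall>t\<in>Itau \<tau>. nrm (x t - y t) \<le> \<kappa> * \<epsilon>)"
    if eps: "0 < \<epsilon>" "\<epsilon> \<le> \<delta> / \<kappa>" and tau: "0 < \<tau>"
      and pseudo: "pseudosol_le nrm (\<lambda>t x. A t *v x + f t x) \<tau> y \<epsilon>"
      and y_in_H: "\<forall>t\<in>Itau \<tau>. y t \<in> H" for \<epsilon> \<tau> y
  proof -
    obtain y' where "\<forall>t\<in>Itau \<tau>. (y has_vector_derivative y' t) (at t within Itau \<tau>)"
      "continuous_on (Itau \<tau>) y'" "\<forall>t\<in>Itau \<tau>. nrm (y' t - (A t *v y t + f t (y t))) \<le> \<epsilon>"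
      using pseudo unfolding pseudosol_le_def by blast
    moreover have "\<kappa> * \<epsilon> \<le> \<delta>" using eps(2) \<kappa> by (simp add: field_simps)
    ultimately interpret shadowing_setup nrm A \<Phi> P N lam \<tau> f H \<delta> L \<epsilon> y y'
      using assms(3,4,7,8) small_L eps(1) y_in_H
      by (intro shadowing_setup.intro dich tau shadowing_setup_axioms.intro) (auto simp: \<kappa>_def)
    show ?thesis using shadowing_solution by (simp add: \<rho>_def q_def \<kappa>_def)
  qed
  then show ?thesis
    unfolding cond_lipschitz_shadowing_def using \<kappa> assms(6) by (intro exI[of _ "\<delta> / \<kappa>"] exI[of _ \<kappa>]) auto
qed

end
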